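(* Let $p \in [0,1]$, $q=1-p$, and let $m, n \geq 1$ be integers. If $X$ is a $\mathrm{Bin}(n, p)$ random variable, then \[ \mathbb{E} |X - np|^{2m} \leq m \max\left(m^{2m-1} npq,\ e^{m-1}(m npq)^m\right). \] In particular, if $Z = X/n$, $\delta\in(0,1]$ and $n \geq 4m/\delta$, then \[ \mathbb{E} |Z - p|^{2m} \leq \delta^m (pq)^m + \delta^{2m-1} pq. \] *)

theory Defs
  imports "HOL-Probability.Probability"
begin

end

theory Submission
  imports Defs
begin

text \<open>
  Let \<open>\<mu>(k, n) = E (X - n p)^k\<close> for \<open>X \<sim> Bin(n, p)\<close>. Splitting off one coin gives
  \<open>\<mu>(k, n + 1) = \<Sum>i. (k choose i) b(i) \<mu>(k - i, n)\<close>, where \<open>b(i)\<close> are the central moments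
  of a Bernoulli variable: \<open>b(0) = 1\<close>, \<open>b(1) = 0\<close> and \<open>|b(i)| \<le> pq\<close> for \<open>i \<ge> 2\<close>.
  Induction on \<open>n\<close> then gives \<open>|\<mu>(k, n)| \<le> G(k, npq)\<close> for the polynomial
  \<open>G(k, x) = \<Sum>j \<le> k/2. j^k x^j / j!\<close>: the step needs
  \<open>G(k, x) + s \<Sum>i \<ge> 2. (k choose i) G(k - i, x) \<le> G(k, x + s)\<close>, which follows by comparing
  coefficients of \<open>x^j / j!\<close> (binomial theorem) and from \<open>(x + s)^j \<ge> x^j + j s x^(j-1)\<close>.
  For \<open>k = 2m\<close>, the bound \<open>j^j / j! \<le> e^(j-1)\<close> dominates the \<open>j\<close>-th term of \<open>G(2m, x)\<close> by a
  geometric sequence in \<open>j\<close>, so each of the \<open>m\<close> nonzero terms is at most the larger of its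
  values at \<open>j = 1\<close> and \<open>j = m\<close>. The normalised bound follows from \<open>4m \<le> \<delta>n\<close> together with
  \<open>m \<le> 4^(2m-1)\<close> and \<open>m e^(m-1) \<le> 4^m\<close>.
\<close>

lemma expectation_binomial_pmf_Suc:
  fixes f :: "nat \<Rightarrow> real"
  assumes p: "p \<in> {0..1}"
  shows "measure_pmf.expectation (binomial_pmf (Suc n) p) f
       = p * measure_pmf.expectation (binomial_pmf n p) (\<lambda>k. f (Suc k))
         + (1 - p) * measure_pmf.expectation (binomial_pmf n p) f"
proof -
  have "binomial_pmf (Suc n) p = bernoulli_pmf p \<bind> (\<lambda>b. map_pmf ((+) (of_bool b)) (binomial_pmf n p))"
    using p by (simp add: binomial_pmf_Suc bind_return_pmf' map_pmf_def of_bool_def)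
  also have "measure_pmf.expectation \<dots> f = (\<Sum>b\<in>UNIV. pmf (bernoulli_pmf p) b *\<^sub>R
      measure_pmf.expectation (map_pmf ((+) (of_bool b)) (binomial_pmf n p)) f)"
    using p by (intro pmf_expectation_bind) (use finite_set_pmf_binomial_pmf[of p n] in auto)
  finally show ?thesis
    using p by (simp add: UNIV_bool)
qed

definition binomial_central_moment :: "nat \<Rightarrow> real \<Rightarrow> nat \<Rightarrow> real" where
  "binomial_central_moment n p k =
     measure_pmf.expectation (binomial_pmf n p) (\<lambda>X. (real X - real n * p) ^ k)"

definition bernoulli_central_moment :: "real \<Rightarrow> nat \<Rightarrow> real" where
  "bernoulli_central_moment p i = p * (1 - p) ^ i + (1 - p) * (- p) ^ i"

lemma binomial_central_moment_Suc:
  assumes p: "p \<in> {0..1}"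
  shows "binomial_central_moment (Suc n) p k =
           (\<Sum>i\<le>k. real (k choose i) * bernoulli_central_moment p i * binomial_central_moment n p (k - i))"
proof -
  let ?E = "measure_pmf.expectation (binomial_pmf n p)"
  have shift: "?E (\<lambda>X. (real X - real n * p + c) ^ k)
      = (\<Sum>i\<le>k. real (k choose i) * c ^ i * binomial_central_moment n p (k - i))" for c
  proof -
    have "(\<lambda>X. (real X - real n * p + c) ^ k)
        = (\<lambda>X. \<Sum>i\<le>k. real (k choose i) * c ^ i * (real X - real n * p) ^ (k - i))"
      by (subst add.commute) (simp add: binomial_ring mult_ac)
    then show ?thesis
      using p unfolding binomial_central_moment_def
      by (simp add: integrable_measure_pmf_finite finite_set_pmf_binomial_pmf)
  qed
  have "binomial_central_moment (Suc n) p k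
      = p * ?E (\<lambda>X. (real X - real n * p + (1 - p)) ^ k) + (1 - p) * ?E (\<lambda>X. (real X - real n * p + - p) ^ k)"
    unfolding binomial_central_moment_def expectation_binomial_pmf_Suc[OF p] by (simp add: algebra_simps)
  then show ?thesis
    unfolding shift bernoulli_central_moment_def
    by (simp add: sum_distrib_left sum.distrib[symmetric] algebra_simps)
qed

lemma abs_bernoulli_central_moment_le:
  assumes p: "p \<in> {0..1}" and i: "2 \<le> i"
  shows "\<bar>bernoulli_central_moment p i\<bar> \<le> p * (1 - p)"
proof -
  define q where "q = 1 - p"
  have pq: "0 \<le> p" "p \<le> 1" "0 \<le> q" "q \<le> 1" using p unfolding q_def by auto
  obtain t where t: "i = Suc (Suc t)" using i by (metis add_2_eq_Suc le_Suc_ex)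
  have "\<bar>bernoulli_central_moment p i\<bar> \<le> p * q ^ i + q * p ^ i"
    unfolding bernoulli_central_moment_def q_def[symmetric]
    using pq by (auto simp: abs_mult power_abs intro: order.trans[OF abs_triangle_ineq])
  also have "\<dots> = p * q * (q * q ^ t + p * p ^ t)" using t by (simp add: algebra_simps)
  also have "\<dots> \<le> p * q * (q + p)"
    using pq by (intro mult_left_mono add_mono) (auto intro: mult_right_le_one_le power_le_one)
  also have "\<dots> = p * (1 - p)" unfolding q_def by simp
  finally show ?thesis .
qed

lemma power_add_ge_tangent:
  fixes x s :: real
  assumes "0 \<le> x" "0 \<le> s"
  shows "x ^ j + real j * s * x ^ (j - 1) \<le> (x + s) ^ j"
proof (induction j)
  case 0
  then show ?case by simp
next
  case (Suc j)
  have "x ^ Suc j + real (Suc j) * s * x ^ j \<le> (x + s) * (x ^ j + real j * s * x ^ (j - 1))"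
    using assms by (cases j) (simp_all add: algebra_simps)
  also have "\<dots> \<le> (x + s) * (x + s) ^ j"
    using Suc assms by (intro mult_left_mono) auto
  finally show ?case by simp
qed

definition moment_majorant :: "nat \<Rightarrow> real \<Rightarrow> real" where
  "moment_majorant k x = (\<Sum>j\<le>k div 2. real j ^ k / fact j * x ^ j)"

lemma moment_majorant_tail_le:
  fixes x :: real
  assumes "0 \<le> x"
  shows "(\<Sum>i=2..k. real (k choose i) * moment_majorant (k - i) x)
           \<le> (\<Sum>j<k div 2. real (Suc j) ^ k / fact j * x ^ j)"
proof -
  have "(\<Sum>i=2..k. real (k choose i) * moment_majorant (k - i) x)
      \<le> (\<Sum>i=2..k. real (k choose i) * (\<Sum>j<k div 2. real j ^ (k - i) / fact j * x ^ j))"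
  proof (intro sum_mono mult_left_mono)
    fix i assume "i \<in> {2..k}"
    then have "{..(k - i) div 2} \<subseteq> {..<k div 2}" by auto
    then show "moment_majorant (k - i) x \<le> (\<Sum>j<k div 2. real j ^ (k - i) / fact j * x ^ j)"
      unfolding moment_majorant_def using assms by (intro sum_mono2) auto
  qed simp
  also have "\<dots> = (\<Sum>j<k div 2. (\<Sum>i=2..k. real (k choose i) * real j ^ (k - i)) * (x ^ j / fact j))"
    by (simp add: sum_distrib_left sum_distrib_right sum.swap[of _ "{2..k}"] mult_ac)
  also have "\<dots> \<le> (\<Sum>j<k div 2. (\<Sum>i\<le>k. real (k choose i) * 1 ^ i * real j ^ (k - i)) * (x ^ j / fact j))"
  proof (intro sum_mono mult_right_mono)
    fix j :: nat
    show "(\<Sum>i=2..k. real (k choose i) * real j ^ (k - i)) \<le> (\<Sum>i\<le>k. real (k choose i) * 1 ^ i * real j ^ (k - i))"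
      by (simp add: sum_mono2)
  qed (use assms in simp)
  also have "\<dots> = (\<Sum>j<k div 2. real (Suc j) ^ k / fact j * x ^ j)"
    by (simp only: binomial_ring[symmetric]) (simp add: add.commute)
  finally show ?thesis .
qed

lemma moment_majorant_step:
  fixes x s :: real
  assumes "0 \<le> x" "0 \<le> s"
  shows "moment_majorant k x + s * (\<Sum>i=2..k. real (k choose i) * moment_majorant (k - i) x)
           \<le> moment_majorant k (x + s)"
proof -
  have shift: "(\<Sum>j<k div 2. real (Suc j) ^ k / fact j * x ^ j)
      = (\<Sum>j\<le>k div 2. real j ^ k / fact j * (real j * x ^ (j - 1)))"
  proof -
    have "real (Suc j) ^ k / fact (Suc j) * (real (Suc j) * x ^ j) = real (Suc j) ^ k / fact j * x ^ j" for j
      by (simp add: fact_Suc del: of_nat_Suc)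
    then show ?thesis
      by (simp only: lessThan_Suc_atMost[symmetric] sum.lessThan_Suc_shift) simp
  qed
  have "moment_majorant k x + s * (\<Sum>i=2..k. real (k choose i) * moment_majorant (k - i) x)
      \<le> moment_majorant k x + s * (\<Sum>j<k div 2. real (Suc j) ^ k / fact j * x ^ j)"
    using moment_majorant_tail_le[OF assms(1)] assms by (intro add_left_mono mult_left_mono) auto
  also have "\<dots> = (\<Sum>j\<le>k div 2. real j ^ k / fact j * (x ^ j + real j * s * x ^ (j - 1)))"
    unfolding shift moment_majorant_def
    by (simp add: sum_distrib_left sum.distrib[symmetric] algebra_simps)
  also have "\<dots> \<le> moment_majorant k (x + s)"
    unfolding moment_majorant_def using power_add_ge_tangent[OF assms] by (intro sum_mono mult_left_mono) auto
  finally show ?thesis .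
qed

lemma abs_binomial_central_moment_Suc_le:
  assumes p: "p \<in> {0..1}" and x: "0 \<le> x"
    and IH: "\<And>j. \<bar>binomial_central_moment n p j\<bar> \<le> moment_majorant j x"
  shows "\<bar>binomial_central_moment (Suc n) p k\<bar>
           \<le> moment_majorant k x + p * (1 - p) * (\<Sum>i=2..k. real (k choose i) * moment_majorant (k - i) x)"
proof -
  define s where "s = p * (1 - p)"
  have s: "0 \<le> s" using p unfolding s_def by simp
  have "\<bar>binomial_central_moment (Suc n) p k\<bar>
      \<le> (\<Sum>i\<le>k. \<bar>real (k choose i) * bernoulli_central_moment p i * binomial_central_moment n p (k - i)\<bar>)"
    unfolding binomial_central_moment_Suc[OF p] by (rule sum_abs)
  also have "\<dots> \<le> (\<Sum>i\<le>k. (if i = 0 then moment_majorant k x else 0)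
      + (if 2 \<le> i then s * (real (k choose i) * moment_majorant (k - i) x) else 0))"
  proof (intro sum_mono)
    fix i :: nat
    consider "i = 0" | "i = 1" | "2 \<le> i" by linarith
    then show "\<bar>real (k choose i) * bernoulli_central_moment p i * binomial_central_moment n p (k - i)\<bar>
        \<le> (if i = 0 then moment_majorant k x else 0)
          + (if 2 \<le> i then s * (real (k choose i) * moment_majorant (k - i) x) else 0)"
    proof cases
      case 3
      have "\<bar>bernoulli_central_moment p i\<bar> * \<bar>binomial_central_moment n p (k - i)\<bar>
          \<le> s * moment_majorant (k - i) x"
        using abs_bernoulli_central_moment_le[OF p 3] IH s unfolding s_def
        by (intro mult_mono) auto
      then have "real (k choose i) * (\<bar>bernoulli_central_moment p i\<bar> * \<bar>binomial_central_moment n p (k - i)\<bar>)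
          \<le> real (k choose i) * (s * moment_majorant (k - i) x)"
        by (rule mult_left_mono) simp
      then show ?thesis
        using 3 by (simp add: abs_mult mult_ac)
    qed (simp_all add: bernoulli_central_moment_def IH)
  qed
  also have "\<dots> = moment_majorant k x + s * (\<Sum>i=2..k. real (k choose i) * moment_majorant (k - i) x)"
  proof -
    have "{i \<in> {..k}. 2 \<le> i} = {2..k}" by auto
    then show ?thesis by (simp add: sum.distrib sum_distrib_left sum.inter_filter[symmetric])
  qed
  finally show ?thesis unfolding s_def .
qed

lemma abs_binomial_central_moment_le:
  assumes p: "p \<in> {0..1}"
  shows "\<bar>binomial_central_moment n p k\<bar> \<le> moment_majorant k (real n * (p * (1 - p)))"
proof (induction n arbitrary: k)
  case 0
  have "binomial_central_moment 0 p k = 0 ^ k"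
    using p by (simp add: binomial_central_moment_def binomial_pmf_0)
  moreover have "moment_majorant k 0 = 0 ^ k"
    unfolding moment_majorant_def by (cases k) (auto simp: power_0_left intro!: sum.neutral)
  ultimately show ?case by simp
next
  case (Suc n)
  have x: "0 \<le> real n * (p * (1 - p))" and s: "0 \<le> p * (1 - p)" using p by simp_all
  have "\<bar>binomial_central_moment (Suc n) p k\<bar>
      \<le> moment_majorant k (real n * (p * (1 - p)))
        + p * (1 - p) * (\<Sum>i=2..k. real (k choose i) * moment_majorant (k - i) (real n * (p * (1 - p))))"
    using abs_binomial_central_moment_Suc_le[OF p x Suc.IH] .
  also have "\<dots> \<le> moment_majorant k (real n * (p * (1 - p)) + p * (1 - p))"
    using moment_majorant_step[OF x s] .
  finally show ?case by (simp add: algebra_simps)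
qed

lemma power_div_fact_le_exp:
  assumes "1 \<le> j"
  shows "real j ^ j / fact j \<le> exp (real j - 1)"
  using assms
proof (induction j rule: dec_induct)
  case base
  then show ?case by simp
next
  case (step j)
  have j: "1 \<le> real j" using step by simp
  have "real (Suc j) ^ Suc j / fact (Suc j) = real (Suc j) ^ j / fact j"
    by (simp add: fact_Suc field_simps del: of_nat_Suc)
  also have "\<dots> = real j ^ j * (1 + 1 / real j) ^ j / fact j"
  proof -
    have "real (Suc j) = real j * (1 + 1 / real j)" using j by (simp add: field_simps)
    then show ?thesis by (simp only: power_mult_distrib)
  qed
  also have "\<dots> \<le> real j ^ j * exp (1 / real j) ^ j / fact j"
    using j by (intro divide_right_mono mult_left_mono power_mono) auto
  also have "\<dots> = real j ^ j / fact j * exp 1"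
    using j by (simp add: exp_of_nat_mult[symmetric])
  also have "\<dots> \<le> exp (real j - 1) * exp 1"
    using step.IH by (intro mult_right_mono) auto
  also have "\<dots> = exp (real (Suc j) - 1)"
    by (simp add: exp_add[symmetric])
  finally show ?case .
qed

lemma exp_diff_one_eq_power:
  assumes "1 \<le> j"
  shows "exp (real j - 1) = exp 1 ^ (j - 1)"
  using assms by (simp add: exp_of_nat_mult[symmetric] of_nat_diff)

lemma mult_power_le_max_endpoints:
  fixes c y :: real
  assumes "0 \<le> c" "0 \<le> y" "1 \<le> j" "j \<le> m"
  shows "c * y ^ (j - 1) \<le> max c (c * y ^ (m - 1))"
proof (cases "y \<le> 1")
  case True
  then have "c * y ^ (j - 1) \<le> c"
    using assms by (intro mult_left_le power_le_one) auto
  then show ?thesis by linarith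
next
  case False
  then have "c * y ^ (j - 1) \<le> c * y ^ (m - 1)"
    using assms by (intro mult_left_mono power_increasing) auto
  then show ?thesis by linarith
qed

lemma moment_majorant_even_term_le:
  fixes x :: real
  assumes x: "0 \<le> x" and j: "1 \<le> j" "j \<le> m"
  shows "real j ^ (2 * m) / fact j * x ^ j
           \<le> max (real m ^ (2 * m - 1) * x) (exp (real m - 1) * (real m * x) ^ m)"
proof -
  have m: "1 \<le> m" using j by simp
  define y where "y = exp 1 * x / real m"
  have y: "0 \<le> y" using x m unfolding y_def by simp
  have "real j ^ (2 * m) = real j ^ j * real j ^ (2 * m - j)"
    using j by (simp add: power_add[symmetric])
  also have "\<dots> \<le> real j ^ j * real m ^ (2 * m - j)"
    using j by (intro mult_left_mono power_mono) auto
  finally have "real j ^ (2 * m) / fact j * x ^ j \<le> real j ^ j * real m ^ (2 * m - j) / fact j * x ^ j"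
    using x by (intro mult_right_mono divide_right_mono) auto
  also have "\<dots> = (real j ^ j / fact j) * (real m ^ (2 * m - j) * x ^ j)"
    by simp
  also have "\<dots> \<le> exp (real j - 1) * (real m ^ (2 * m - j) * x ^ j)"
    using power_div_fact_le_exp[OF j(1)] x by (intro mult_right_mono) auto
  also have "\<dots> = real m ^ (2 * m - 1) * x * y ^ (j - 1)"
  proof -
    have "real m ^ (2 * m - 1) = real m ^ (2 * m - j) * real m ^ (j - 1)"
      using j by (simp add: power_add[symmetric])
    moreover have "x ^ j = x * x ^ (j - 1)"
      using j by (simp add: power_Suc[symmetric])
    ultimately show ?thesis
      unfolding exp_diff_one_eq_power[OF j(1)] y_def
      using m by (simp add: power_divide power_mult_distrib field_simps)
  qed
  also have "\<dots> \<le> max (real m ^ (2 * m - 1) * x) (real m ^ (2 * m - 1) * x * y ^ (m - 1))"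
    using x y j by (intro mult_power_le_max_endpoints) auto
  also have "real m ^ (2 * m - 1) * x * y ^ (m - 1) = exp (real m - 1) * (real m * x) ^ m"
  proof -
    have "2 * m - 1 = m + (m - 1)" using j by simp
    then have "real m ^ (2 * m - 1) = real m ^ m * real m ^ (m - 1)"
      by (simp only: power_add)
    moreover have "x ^ m = x * x ^ (m - 1)"
      using j by (simp add: power_Suc[symmetric])
    ultimately show ?thesis
      unfolding exp_diff_one_eq_power[OF m] y_def power_mult_distrib
      using m j by (simp add: power_divide field_simps)
  qed
  finally show ?thesis .
qed

lemma moment_majorant_even_le:
  fixes x :: real
  assumes "0 \<le> x" "1 \<le> m"
  shows "moment_majorant (2 * m) x
           \<le> real m * max (real m ^ (2 * m - 1) * x) (exp (real m - 1) * (real m * x) ^ m)"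
proof -
  let ?M = "max (real m ^ (2 * m - 1) * x) (exp (real m - 1) * (real m * x) ^ m)"
  have "moment_majorant (2 * m) x = (\<Sum>j\<in>{1..m}. real j ^ (2 * m) / fact j * x ^ j)"
    unfolding moment_majorant_def using assms(2) by (intro sum.mono_neutral_right) auto
  also have "\<dots> \<le> (\<Sum>j\<in>{1..m}. ?M)"
    using moment_majorant_even_term_le[OF assms(1)] by (intro sum_mono) auto
  also have "\<dots> = real m * ?M" by simp
  finally show ?thesis .
qed

lemma binomial_abs_central_moment_even_le:
  fixes p :: real and n m :: nat
  assumes p: "p \<in> {0..1}" and m: "1 \<le> m"
  defines "x \<equiv> real n * (p * (1 - p))"
  shows "measure_pmf.expectation (binomial_pmf n p) (\<lambda>X. \<bar>real X - real n * p\<bar> ^ (2 * m))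
           \<le> real m * max (real m ^ (2 * m - 1) * x) (exp (real m - 1) * (real m * x) ^ m)"
proof -
  have "measure_pmf.expectation (binomial_pmf n p) (\<lambda>X. \<bar>real X - real n * p\<bar> ^ (2 * m))
      = binomial_central_moment n p (2 * m)"
    unfolding binomial_central_moment_def by (simp add: power_even_abs)
  also have "\<dots> \<le> moment_majorant (2 * m) x"
    using abs_binomial_central_moment_le[OF p, of n "2 * m"] unfolding x_def by linarith
  also have "\<dots> \<le> real m * max (real m ^ (2 * m - 1) * x) (exp (real m - 1) * (real m * x) ^ m)"
    using p m unfolding x_def by (intro moment_majorant_even_le) simp_all
  finally show ?thesis .
qed

lemma real_le_four_power: "real m \<le> 4 ^ (2 * m - 1)"
proof -
  have "m < 2 ^ m" by (rule less_exp)
  also have "(2::nat) ^ m \<le> 2 ^ (2 * (2 * m - 1))" by (intro power_increasing) auto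
  also have "\<dots> = 4 ^ (2 * m - 1)" by (simp add: power_mult)
  finally show ?thesis by (metis less_imp_le of_nat_le_iff of_nat_numeral of_nat_power)
qed

lemma real_mult_exp_le_four_power: "real m * exp (real m - 1) \<le> 4 ^ m"
proof (cases "m = 0")
  case False
  have "real m * 3 ^ (m - 1) \<le> 4 ^ m" for m :: nat
  proof (induction m)
    case (Suc m)
    show ?case
    proof (cases m)
      case (Suc k)
      then have "real (Suc m) * 3 ^ (Suc m - 1) = 3 * (real m * 3 ^ (m - 1)) + 3 ^ m"
        by (simp add: algebra_simps)
      also have "\<dots> \<le> 3 * 4 ^ m + 4 ^ m"
        using Suc.IH by (intro add_mono power_mono) auto
      finally show ?thesis by simp
    qed simp
  qed simp
  moreover have "exp (real m - 1) \<le> 3 ^ (m - 1)"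
    using False exp_le by (simp add: exp_diff_one_eq_power power_mono)
  ultimately show ?thesis
    by (meson mult_left_mono of_nat_0_le_iff order.trans)
qed simp

lemma moment_bound_linear_term_div_le:
  fixes \<delta> s :: real and m n :: nat
  assumes m: "1 \<le> m" and n0: "0 < real n" and n: "4 * real m \<le> \<delta> * real n" and s: "0 \<le> s"
  shows "real m * (real m ^ (2 * m - 1) * (real n * s)) / real n ^ (2 * m) \<le> \<delta> ^ (2 * m - 1) * s"
proof -
  have "real m * (real m ^ (2 * m - 1) * (real n * s)) / real n ^ (2 * m)
      = real m * real m ^ (2 * m - 1) * s / real n ^ (2 * m - 1)"
  proof -
    have "2 * m = Suc (2 * m - 1)" using m by simp
    then have "real n ^ (2 * m) = real n * real n ^ (2 * m - 1)" by (metis power_Suc)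
    then show ?thesis using n0 by simp
  qed
  also have "\<dots> \<le> (4 * real m) ^ (2 * m - 1) * s / real n ^ (2 * m - 1)"
  proof -
    have "real m * real m ^ (2 * m - 1) \<le> (4 * real m) ^ (2 * m - 1)"
      using mult_right_mono[OF real_le_four_power, of "real m ^ (2 * m - 1)"]
      by (simp add: power_mult_distrib)
    then show ?thesis using s n0 by (intro divide_right_mono mult_right_mono) auto
  qed
  also have "\<dots> \<le> (\<delta> * real n) ^ (2 * m - 1) * s / real n ^ (2 * m - 1)"
    using n s n0 by (intro divide_right_mono mult_right_mono power_mono) auto
  also have "\<dots> = \<delta> ^ (2 * m - 1) * s"
    using n0 by (simp add: power_mult_distrib)
  finally show ?thesis .
qed

lemma moment_bound_power_term_div_le:
  fixes \<delta> s :: real and m n :: nat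
  assumes n0: "0 < real n" and n: "4 * real m \<le> \<delta> * real n" and s: "0 \<le> s"
  shows "real m * (exp (real m - 1) * (real m * (real n * s)) ^ m) / real n ^ (2 * m) \<le> \<delta> ^ m * s ^ m"
proof -
  have "real m * (exp (real m - 1) * (real m * (real n * s)) ^ m) / real n ^ (2 * m)
      = real m * exp (real m - 1) * real m ^ m * s ^ m / real n ^ m"
  proof -
    have "real n ^ (2 * m) = real n ^ m * real n ^ m" by (simp add: mult_2 power_add)
    then show ?thesis using n0 by (simp add: power_mult_distrib)
  qed
  also have "\<dots> \<le> (4 * real m) ^ m * s ^ m / real n ^ m"
  proof -
    have "real m * exp (real m - 1) * real m ^ m \<le> (4 * real m) ^ m"
      using mult_right_mono[OF real_mult_exp_le_four_power, of "real m ^ m"]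
      by (simp add: power_mult_distrib)
    then show ?thesis using s n0 by (intro divide_right_mono mult_right_mono) auto
  qed
  also have "\<dots> \<le> (\<delta> * real n) ^ m * s ^ m / real n ^ m"
    using n s n0 by (intro divide_right_mono mult_right_mono power_mono) auto
  also have "\<dots> = \<delta> ^ m * s ^ m"
    using n0 by (simp add: power_mult_distrib)
  finally show ?thesis .
qed

lemma moment_bound_div_power_le:
  fixes \<delta> s :: real and m n :: nat
  assumes m: "1 \<le> m" and \<delta>: "0 < \<delta>" and n: "4 * real m \<le> \<delta> * real n" and s: "0 \<le> s"
  shows "real m * max (real m ^ (2 * m - 1) * (real n * s)) (exp (real m - 1) * (real m * (real n * s)) ^ m)
           / real n ^ (2 * m)
         \<le> \<delta> ^ m * s ^ m + \<delta> ^ (2 * m - 1) * s"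
proof -
  have "0 < \<delta> * real n" using m n by linarith
  then have n0: "0 < real n" using \<delta> by (simp add: zero_less_mult_iff)
  define a where "a = real m ^ (2 * m - 1) * (real n * s)"
  define b where "b = exp (real m - 1) * (real m * (real n * s)) ^ m"
  have "0 \<le> a" "0 \<le> b" using s unfolding a_def b_def by simp_all
  then have "real m * max a b \<le> real m * a + real m * b"
    by (simp add: max_def)
  then have "real m * max a b / real n ^ (2 * m) \<le> real m * a / real n ^ (2 * m) + real m * b / real n ^ (2 * m)"
    by (simp add: add_divide_distrib[symmetric] divide_right_mono)
  then show ?thesis
    using moment_bound_linear_term_div_le[OF m n0 n s] moment_bound_power_term_div_le[OF n0 n s]
    unfolding a_def b_def by linarith
qed

lemma expectation_abs_div_minus_power:
  fixes M :: "nat pmf" and c p :: real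
  assumes "0 < c"
  shows "measure_pmf.expectation M (\<lambda>X. \<bar>real X / c - p\<bar> ^ k)
           = measure_pmf.expectation M (\<lambda>X. \<bar>real X - c * p\<bar> ^ k) / c ^ k"
proof -
  have "\<bar>real X / c - p\<bar> ^ k = \<bar>real X - c * p\<bar> ^ k / c ^ k" for X
  proof -
    have "real X / c - p = (real X - c * p) / c"
      using assms by (simp add: field_simps)
    then show ?thesis using assms by (simp add: power_divide)
  qed
  then show ?thesis by simp
qed

lemma binomial_abs_proportion_deviation_even_le:
  fixes p \<delta> :: real and n m :: nat
  assumes p: "p \<in> {0..1}" and m: "1 \<le> m" and \<delta>: "0 < \<delta>" and n: "4 * real m \<le> \<delta> * real n"
  shows "measure_pmf.expectation (binomial_pmf n p) (\<lambda>X. \<bar>real X / real n - p\<bar> ^ (2 * m))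
           \<le> \<delta> ^ m * (p * (1 - p)) ^ m + \<delta> ^ (2 * m - 1) * (p * (1 - p))"
proof -
  let ?B = "real m * max (real m ^ (2 * m - 1) * (real n * (p * (1 - p))))
                         (exp (real m - 1) * (real m * (real n * (p * (1 - p)))) ^ m)"
  have "0 < \<delta> * real n" using m n by linarith
  then have "0 < real n" using \<delta> by (simp add: zero_less_mult_iff)
  then have "measure_pmf.expectation (binomial_pmf n p) (\<lambda>X. \<bar>real X / real n - p\<bar> ^ (2 * m))
      = measure_pmf.expectation (binomial_pmf n p) (\<lambda>X. \<bar>real X - real n * p\<bar> ^ (2 * m))
          / real n ^ (2 * m)"
    by (rule expectation_abs_div_minus_power)
  also have "\<dots> \<le> ?B / real n ^ (2 * m)"
    using binomial_abs_central_moment_even_le[OF p m] by (simp add: divide_right_mono)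
  also have "\<dots> \<le> \<delta> ^ m * (p * (1 - p)) ^ m + \<delta> ^ (2 * m - 1) * (p * (1 - p))"
    using p by (intro moment_bound_div_power_le m \<delta> n) simp
  finally show ?thesis .
qed

theorem lemma17:
  fixes p :: real and m n :: nat
  assumes "0 \<le> p" "p \<le> 1" "m \<ge> 1" "n \<ge> 1"
  defines "q \<equiv> 1 - p"
  shows "measure_pmf.expectation (binomial_pmf n p) (\<lambda>X. \<bar>real X - real n * p\<bar> ^ (2 * m))
           \<le> real m * max (real m ^ (2 * m - 1) * real n * p * q)
                             (exp (real m - 1) * (real m * real n * p * q) ^ m)
         \<and> (\<forall>\<delta>::real. 0 < \<delta> \<and> \<delta> \<le> 1 \<and> real n \<ge> 4 * real m / \<delta> \<longrightarrow>
           measure_pmf.expectation (binomial_pmf n p) (\<lambda>X. \<bar>real X / real n - p\<bar> ^ (2 * m))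
           \<le> \<delta> ^ m * (p * q) ^ m + \<delta> ^ (2 * m - 1) * (p * q))"
proof -
  have p: "p \<in> {0..1}" using assms by simp
  have "4 * real m \<le> \<delta> * real n" if "0 < \<delta>" "real n \<ge> 4 * real m / \<delta>" for \<delta> :: real
    using that by (simp add: field_simps)
  then show ?thesis
    using binomial_abs_central_moment_even_le[OF p \<open>m \<ge> 1\<close>, of n]
          binomial_abs_proportion_deviation_even_le[OF p \<open>m \<ge> 1\<close>]
    unfolding q_def by (auto simp: mult.assoc)
qed

end
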